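(* Let $a,b,c\in\mathbb{Z}$ with $a\equiv2\pmod 4$, $b$ odd, and $ab(a+b)c$ a perfect square. Then the equation $ax^2+by^2=cz^2$ is not partition regular with respect to $x,y$.
   Context: The equation $ax^2+by^2=cz^2$ is partition regular with respect to $x,y$ if for every finite coloring of $\mathbb{N}=\{1,2,\dots\}$ there exist distinct $x,y\in\mathbb{N}$ of the same color and $z\in\mathbb{N}$ with $ax^2+by^2=cz^2$. A perfect square is $k^2$, $k\in\mathbb{Z}$. *)

theory Defs
  imports Main
begin

definition partition_regular_xy :: "int \<Rightarrow> int \<Rightarrow> int \<Rightarrow> bool" where
  "partition_regular_xy a b c \<longleftrightarrow>
     (\<forall>(r::nat) (chi::nat \<Rightarrow> nat). (\<forall>n. n \<ge> 1 \<longrightarrow> chi n < r) \<longrightarrow>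
        (\<exists>x y z::nat. x \<ge> 1 \<and> y \<ge> 1 \<and> z \<ge> 1 \<and> x \<noteq> y \<and> chi x = chi y \<and>
            a * (int x)^2 + b * (int y)^2 = c * (int z)^2))"

definition perfect_square :: "int \<Rightarrow> bool" where
  "perfect_square m \<longleftrightarrow> (\<exists>k::int. m = k^2)"

end

theory Submission
  imports Defs "HOL-Computational_Algebra.Primes"
begin

(* Colour n by the parity of its 2-adic valuation.  Write a = 2 a' and c = 2^e c' with a', c' odd.
   Since a b (a + b) c = 2^(e+1) a' b (2 a' + b) c' is a square, e is odd and a' b (2 a' + b) c'
   is a square.  Let a x^2 + b y^2 = c z^2 with x, y of the same colour, x = 2^i u, y = 2^j w.
   The right-hand side has odd 2-adic valuation, so b y^2 cannot dominate: j \<ge> i + 2, and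
   dividing by 2^(2i+1) leaves a' u^2 + 4 (...) = c' v^2, whence c' \<equiv> a' (mod 4).  But then
   a' b (2 a' + b) c' \<equiv> b (2 a' + b) = b^2 + 2 a' b \<equiv> 3 (mod 4), which no square is. *)

lemma power_mult_square:
  fixes c u :: "'a::comm_monoid_mult"
  shows "(c ^ i * u)\<^sup>2 = c ^ (2 * i) * u\<^sup>2"
  by (simp add: power_mult_distrib power_even_eq)

lemma int_pow2_multiplicity_decompose:
  fixes n :: int
  assumes "n \<noteq> 0"
  obtains u where "n = 2 ^ multiplicity 2 n * u" "odd u"
  using multiplicity_decompose'[OF assms, of 2] that by auto

lemma pow2_mult_odd_cancel:
  fixes A B :: int
  assumes "2 ^ p * A = 2 ^ q * B" "odd A" "odd B"
  shows "p = q \<and> A = B"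
proof -
  have "multiplicity 2 (2 ^ p * A) = p" "multiplicity 2 (2 ^ q * B) = q"
    using assms(2,3) by (auto intro!: multiplicity_decomposeI)
  then have "p = q" using assms(1) by metis
  then show ?thesis using assms(1) by simp
qed

lemma odd_square_mod_4:
  fixes n :: int
  assumes "odd n"
  shows "n\<^sup>2 mod 4 = 1"
proof -
  obtain m where "n = 2 * m + 1" using assms oddE by blast
  then have "n\<^sup>2 = 1 + 4 * (m\<^sup>2 + m)" by (simp add: power2_eq_square algebra_simps)
  then show ?thesis by presburger
qed

lemma square_mod_4_neq_3:
  fixes k :: int
  shows "k\<^sup>2 mod 4 \<noteq> 3"
proof (cases "even k")
  case True
  then obtain m where "k = 2 * m" by blast
  then show ?thesis by (simp add: power2_eq_square)
qed (simp add: odd_square_mod_4)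

lemma perfect_square_pow2_mult_odd:
  assumes "perfect_square (2 ^ n * m)" "odd m"
  shows "even n \<and> perfect_square m"
proof -
  obtain k where k: "2 ^ n * m = k\<^sup>2" using assms(1) unfolding perfect_square_def by blast
  have "k \<noteq> 0" using k assms(2) by auto
  then obtain k' where k': "k = 2 ^ multiplicity 2 k * k'" "odd k'"
    by (rule int_pow2_multiplicity_decompose)
  have "2 ^ n * m = 2 ^ (2 * multiplicity 2 k) * k'\<^sup>2"
    using k k'(1) power_mult_square by metis
  then have "n = 2 * multiplicity 2 k \<and> m = k'\<^sup>2"
    using pow2_mult_odd_cancel assms(2) k'(2) by simp
  then show ?thesis unfolding perfect_square_def by auto
qed

lemma not_perfect_square_if_mod_4_eq:
  fixes a b c :: int
  assumes "odd a" "odd b" "c mod 4 = a mod 4"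
  shows "\<not> perfect_square (a * b * (2 * a + b) * c)"
proof
  have "(a * c) mod 4 = (a * (c mod 4)) mod 4" by (simp add: mod_mult_right_eq)
  also have "\<dots> = a\<^sup>2 mod 4" using assms(3) by (simp add: mod_mult_right_eq power2_eq_square)
  finally have ac: "(a * c) mod 4 = 1" using odd_square_mod_4[OF assms(1)] by simp
  have "b\<^sup>2 = 4 * (b\<^sup>2 div 4) + 1" using div_mult_mod_eq[of "b\<^sup>2" 4] odd_square_mod_4[OF assms(2)] by simp
  moreover have "a * b = 2 * ((a * b) div 2) + 1" using assms by simp
  ultimately have "b * (2 * a + b) = 3 + 4 * (b\<^sup>2 div 4 + (a * b) div 2)"
    by (simp add: power2_eq_square algebra_simps)
  then have bab: "(b * (2 * a + b)) mod 4 = 3" by presburger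
  have "(a * b * (2 * a + b) * c) mod 4 = ((a * c) mod 4 * ((b * (2 * a + b)) mod 4)) mod 4"
    by (simp add: mod_mult_eq ac_simps)
  then have "(a * b * (2 * a + b) * c) mod 4 = 3" using ac bab by simp
  moreover assume "perfect_square (a * b * (2 * a + b) * c)"
  ultimately show False unfolding perfect_square_def using square_mod_4_neq_3 by auto
qed

lemma two_adic_form_of_sum:
  fixes a b u w :: int
  assumes "odd a" "odd b" "odd u" "odd w" "even (i + j)"
  obtains P Q where "2 * a * (2 ^ i * u)\<^sup>2 + b * (2 ^ j * w)\<^sup>2 = 2 ^ P * Q"
    "odd Q" "even P \<or> Q mod 4 = a mod 4"
proof (cases "j \<le> i")
  case True
  then have "(2::int) ^ (2 * i) = 2 ^ (2 * j) * 2 ^ (2 * (i - j))" by (simp flip: power_add)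
  then have "2 * a * (2 ^ i * u)\<^sup>2 + b * (2 ^ j * w)\<^sup>2
      = 2 ^ (2 * j) * (2 * a * 2 ^ (2 * (i - j)) * u\<^sup>2 + b * w\<^sup>2)"
    unfolding power_mult_square by (simp only:) (simp add: algebra_simps)
  moreover have "odd (2 * a * 2 ^ (2 * (i - j)) * u\<^sup>2 + b * w\<^sup>2)" using assms by simp
  ultimately show ?thesis using that[of "2 * j"] by simp
next
  case False
  define d where "d = 2 * j - (2 * i + 3)"
  have "2 * j = (2 * i + 1) + 2 + d" using assms(5) False unfolding d_def by presburger
  then have "(2::int) ^ (2 * j) = 2 ^ (2 * i + 1) * 4 * 2 ^ d" by (simp add: power_add)
  moreover have "(2::int) ^ (2 * i + 1) = 2 * 2 ^ (2 * i)" by simp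
  moreover define Q where "Q = a * u\<^sup>2 + 4 * (2 ^ d * b * w\<^sup>2)"
  ultimately have "2 * a * (2 ^ i * u)\<^sup>2 + b * (2 ^ j * w)\<^sup>2 = 2 ^ (2 * i + 1) * Q"
    unfolding power_mult_square by (simp only:) (simp add: algebra_simps)
  moreover have "odd Q" using assms unfolding Q_def by simp
  moreover have "Q mod 4 = a mod 4"
  proof -
    have "Q mod 4 = (a * u\<^sup>2) mod 4" unfolding Q_def by simp
    also have "\<dots> = (a * (u\<^sup>2 mod 4)) mod 4" by (simp add: mod_mult_right_eq)
    also have "\<dots> = a mod 4" using odd_square_mod_4[OF assms(3)] by simp
    finally show ?thesis .
  qed
  ultimately show ?thesis using that by blast
qed

lemma no_solution_with_equal_2_adic_parity:
  fixes a b c x y z :: int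
  assumes "a mod 4 = 2" "odd b" "perfect_square (a * b * (a + b) * c)"
    and "x \<noteq> 0" "y \<noteq> 0" "z \<noteq> 0" "even (multiplicity 2 x + multiplicity 2 y)"
    and "a * x\<^sup>2 + b * y\<^sup>2 = c * z\<^sup>2"
  shows False
proof -
  obtain a' where a': "a = 2 * a'" "odd a'"
  proof
    show "a = 2 * (2 * (a div 4) + 1)" using assms(1) by presburger
  qed simp
  obtain u where u: "x = 2 ^ multiplicity 2 x * u" "odd u"
    using assms(4) by (rule int_pow2_multiplicity_decompose)
  obtain w where w: "y = 2 ^ multiplicity 2 y * w" "odd w"
    using assms(5) by (rule int_pow2_multiplicity_decompose)
  obtain t v where v: "z = 2 ^ t * v" "odd v"
    using int_pow2_multiplicity_decompose[OF assms(6)] by metis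
  obtain P Q where PQ: "a * x\<^sup>2 + b * y\<^sup>2 = 2 ^ P * Q" "odd Q" "even P \<or> Q mod 4 = a' mod 4"
    using two_adic_form_of_sum[OF a'(2) assms(2) u(2) w(2) assms(7)] a'(1) u(1) w(1) by metis
  have "c \<noteq> 0" using PQ(1,2) assms(8) by auto
  then obtain e c' where c': "c = 2 ^ e * c'" "odd c'"
    using int_pow2_multiplicity_decompose by metis
  have "c * z\<^sup>2 = 2 ^ (e + 2 * t) * (c' * v\<^sup>2)"
    unfolding c'(1) v(1) power_mult_square power_add by (simp only: ac_simps)
  then have "2 ^ P * Q = 2 ^ (e + 2 * t) * (c' * v\<^sup>2)" using PQ(1) assms(8) by simp
  then have P: "P = e + 2 * t" and Q: "Q = c' * v\<^sup>2"
    using pow2_mult_odd_cancel PQ(2) c'(2) v(2) by auto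
  have "a * b * (a + b) * c = 2 ^ (e + 1) * (a' * b * (2 * a' + b) * c')"
    using a'(1) c'(1) by (simp add: algebra_simps)
  with assms(3) have "perfect_square (2 ^ (e + 1) * (a' * b * (2 * a' + b) * c'))"
    by simp
  moreover have "odd (a' * b * (2 * a' + b) * c')" using assms(2) a'(2) c'(2) by simp
  ultimately have "even (e + 1)" and square: "perfect_square (a' * b * (2 * a' + b) * c')"
    using perfect_square_pow2_mult_odd by blast+
  then have "Q mod 4 = a' mod 4" using PQ(3) P by simp
  moreover have "Q mod 4 = c' mod 4"
    using Q odd_square_mod_4[OF v(2)] by (simp add: mod_mult_right_eq[of c', symmetric])
  ultimately show False
    using not_perfect_square_if_mod_4_eq a'(2) assms(2) square by simp
qed

theorem propositionP:
  fixes a b c :: int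
  assumes "a mod 4 = 2"
    and "odd b"
    and "perfect_square (a * b * (a + b) * c)"
  shows "\<not> partition_regular_xy a b c"
proof
  assume "partition_regular_xy a b c"
  then obtain x y z :: nat where "x \<ge> 1" "y \<ge> 1" "z \<ge> 1"
      "multiplicity 2 (int x) mod 2 = multiplicity 2 (int y) mod 2"
      "a * (int x)\<^sup>2 + b * (int y)\<^sup>2 = c * (int z)\<^sup>2"
    unfolding partition_regular_xy_def
    by (elim allE[where x = 2] allE[where x = "\<lambda>n. multiplicity 2 (int n) mod 2"]) auto
  then show False
    using no_solution_with_equal_2_adic_parity[OF assms, of "int x" "int y" "int z"] by presburger
qed

end
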